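(* Let $C=\mathbb{S}^1\times\mathbb{R}$ be the flat Euclidean cylinder, with $\mathbb{S}^1=\mathbb{R}/\mathbb{Z}$, and let $f:C\to C$ be a geodesic-preserving bijection. Then $f$ is a composition of an isometry of $C$, an affine map in the $\mathbb{R}$-coordinate, and a twisting map.
   Context: $C$ carries the product of the standard flat metric on $\mathbb{R}/\mathbb{Z}$ and the standard metric on $\mathbb{R}$. A geodesic is the image of a locally isometric immersion of the whole real line; a bijection (not assumed continuous) is geodesic-preserving if it maps every geodesic onto a geodesic as a set. An affine map in the $\mathbb{R}$-coordinate is $(r_1,r_2)\mapsto(r_1,ar_2+b)$ with $a\neq 0$. For $\alpha\in\mathbb{R}$ the twisting map is $t_\alpha(r_1,r_2)=(r_1+\alpha r_2,\,r_2)$. *)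

theory Defs
  imports "HOL-Analysis.Analysis"
begin

text \<open>The flat cylinder C = (R/Z) x R, represented by the fundamental domain [0,1) x R.\<close>

typedef cyl = "{p :: real \<times> real. 0 \<le> fst p \<and> fst p < 1}"
  by (rule exI[of _ "(0,0)"]) simp

definition cpt :: "real \<Rightarrow> real \<Rightarrow> cyl" where
  "cpt r1 r2 = Abs_cyl (frac r1, r2)"

definition cx :: "cyl \<Rightarrow> real" where "cx p = fst (Rep_cyl p)"
definition cy :: "cyl \<Rightarrow> real" where "cy p = snd (Rep_cyl p)"

definition cdist :: "cyl \<Rightarrow> cyl \<Rightarrow> real" where
  "cdist p q = (INF k::int. dist (cx p, cy p) (cx q + of_int k, cy q))"

definition loc_isom_immersion :: "(real \<Rightarrow> cyl) \<Rightarrow> bool" where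
  "loc_isom_immersion \<gamma> \<longleftrightarrow>
     (\<forall>t. \<exists>e>0. \<forall>s\<in>ball t e. \<forall>s'\<in>ball t e. cdist (\<gamma> s) (\<gamma> s') = dist s s')"

definition geodesic :: "cyl set \<Rightarrow> bool" where
  "geodesic G \<longleftrightarrow> (\<exists>\<gamma>. loc_isom_immersion \<gamma> \<and> range \<gamma> = G)"

definition geodesic_preserving :: "(cyl \<Rightarrow> cyl) \<Rightarrow> bool" where
  "geodesic_preserving f \<longleftrightarrow> bij f \<and> (\<forall>G. geodesic G \<longrightarrow> geodesic (f ` G))"

definition cyl_isometry :: "(cyl \<Rightarrow> cyl) \<Rightarrow> bool" where
  "cyl_isometry g \<longleftrightarrow> bij g \<and> (\<forall>p q. cdist (g p) (g q) = cdist p q)"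

definition affine_R :: "real \<Rightarrow> real \<Rightarrow> cyl \<Rightarrow> cyl" where
  "affine_R a b p = cpt (cx p) (a * cy p + b)"

definition twist :: "real \<Rightarrow> cyl \<Rightarrow> cyl" where
  "twist \<alpha> p = cpt (cx p + \<alpha> * cy p) (cy p)"

end

theory Submission
  imports Defs
begin

(* Geodesics of C are the images of straight lines of the plane: the horizontal circles
   {y = const} and the helices {x = x0 + c y mod 1}.  A circle meets a helix in exactly one
   point, whereas two circles or two helices never meet in exactly one point.  A bijection
   preserves this, so f maps circles to circles and helices to helices, and the slope of the
   image of a helix depends only on the slope of the helix.  In coordinates,
   f(x, y) = (F(x, y), h(y)) with F(x + c t, t) = psi(x, c) + sigma(c) h(t) mod 1.  Every
   defect of additivity or multiplicativity in this equation is an additive function with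
   integer values, hence zero; so h is affine, F(x, y) = l x + alpha y + beta mod 1, and
   bijectivity forces l = +-1. *)

section \<open>Coordinates and distance on the cylinder\<close>

lemma frac_eq_iff_diff_Ints: "frac u = frac u' \<longleftrightarrow> u - u' \<in> \<int>"
proof
  assume "frac u = frac u'"
  then have "u - u' = of_int (\<lfloor>u\<rfloor> - \<lfloor>u'\<rfloor>)" by (simp add: frac_def)
  then show "u - u' \<in> \<int>" by simp
next
  assume "u - u' \<in> \<int>"
  then obtain k where "u = u' + of_int k" by (metis Ints_cases add.commute diff_add_cancel)
  then show "frac u = frac u'" by simp
qed

lemma cx_cpt [simp]: "cx (cpt u v) = frac u"
  unfolding cx_def cpt_def by (subst Abs_cyl_inverse) (auto simp: frac_lt_1)

lemma cy_cpt [simp]: "cy (cpt u v) = v"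
  unfolding cy_def cpt_def by (subst Abs_cyl_inverse) (auto simp: frac_lt_1)

lemma cpt_cx_cy [simp]: "cpt (cx p) (cy p) = p"
proof -
  have "frac (cx p) = cx p" using Rep_cyl[of p] by (simp add: cx_def frac_eq)
  then show ?thesis by (simp add: cpt_def cx_def cy_def Rep_cyl_inverse)
qed

lemma cpt_eq_iff: "cpt u v = cpt u' v' \<longleftrightarrow> u - u' \<in> \<int> \<and> v = v'"
  by (metis cpt_cx_cy cx_cpt cy_cpt frac_eq_iff_diff_Ints)

lemma cpt_mult_frac: "l \<in> \<int> \<Longrightarrow> cpt (l * frac u + b) v = cpt (l * u + b) v"
  unfolding cpt_eq_iff by (simp add: frac_def flip: right_diff_distrib)

lemma half_notin_Ints: "(1/2 :: real) \<notin> \<int>"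
  using Ints_nonzero_abs_less1[of "1/2 :: real"] by auto

definition dist_Ints :: "real \<Rightarrow> real" where
  "dist_Ints x = \<bar>x - of_int (round x)\<bar>"

lemma dist_Ints_le: "dist_Ints x \<le> \<bar>x - of_int k\<bar>"
  unfolding dist_Ints_def by (rule round_diff_minimal)

lemma dist_Ints_nonneg: "dist_Ints x \<ge> 0"
  by (simp add: dist_Ints_def)

lemma dist_Ints_cong: "x - y \<in> \<int> \<Longrightarrow> dist_Ints x = dist_Ints y"
proof -
  assume "x - y \<in> \<int>"
  then obtain k where k: "x = y + of_int k" by (metis Ints_cases add.commute diff_add_cancel)
  have "dist_Ints x \<le> dist_Ints y"
    using dist_Ints_le[of x "round y + k"] unfolding dist_Ints_def k by (simp add: algebra_simps)
  moreover have "dist_Ints y \<le> dist_Ints x"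
    using dist_Ints_le[of y "round x - k"] unfolding dist_Ints_def k by (simp add: algebra_simps)
  ultimately show ?thesis by simp
qed

lemma dist_Ints_minus: "dist_Ints (- x) = dist_Ints x"
proof -
  have "dist_Ints (- x) \<le> dist_Ints x"
    using dist_Ints_le[of "- x" "- round x"] by (simp add: dist_Ints_def abs_minus_commute)
  moreover have "dist_Ints x \<le> dist_Ints (- x)"
    using dist_Ints_le[of x "- round (- x)"] by (simp add: dist_Ints_def abs_minus_commute)
  ultimately show ?thesis by simp
qed

lemma dist_Ints_eq_abs: "\<bar>x\<bar> \<le> 1/2 \<Longrightarrow> dist_Ints x = \<bar>x\<bar>"
proof (rule antisym)
  show "dist_Ints x \<le> \<bar>x\<bar>" using dist_Ints_le[of x 0] by simp
  assume x: "\<bar>x\<bar> \<le> 1/2"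
  have "\<bar>x\<bar> \<le> \<bar>x - of_int k\<bar>" for k :: int
  proof (cases "k = 0")
    case False
    then have "\<bar>of_int k :: real\<bar> \<ge> 1" by linarith
    then show ?thesis using x by linarith
  qed simp
  then show "\<bar>x\<bar> \<le> dist_Ints x" unfolding dist_Ints_def by blast
qed

lemma cdist_eq: "cdist p q = sqrt ((dist_Ints (cx p - cx q))\<^sup>2 + (cy p - cy q)\<^sup>2)"
proof -
  let ?d = "cx p - cx q" and ?e = "cy p - cy q"
  have dist_shift: "dist (cx p, cy p) (cx q + of_int k, cy q) = sqrt ((?d - of_int k)\<^sup>2 + ?e\<^sup>2)"
    for k :: int
    by (simp add: dist_Pair_Pair dist_real_def algebra_simps)
  have "(dist_Ints ?d)\<^sup>2 \<le> (?d - of_int k)\<^sup>2" for k :: int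
    using power_mono[OF dist_Ints_le[of ?d k] dist_Ints_nonneg[of ?d], of 2] by simp
  then have lower: "sqrt ((dist_Ints ?d)\<^sup>2 + ?e\<^sup>2) \<le> sqrt ((?d - of_int k)\<^sup>2 + ?e\<^sup>2)" for k :: int
    by simp
  have attained: "sqrt ((dist_Ints ?d)\<^sup>2 + ?e\<^sup>2) = sqrt ((?d - of_int (round ?d))\<^sup>2 + ?e\<^sup>2)"
    by (simp add: dist_Ints_def)
  show ?thesis unfolding cdist_def dist_shift
  proof (rule antisym)
    show "(INF k. sqrt ((?d - of_int k)\<^sup>2 + ?e\<^sup>2)) \<le> sqrt ((dist_Ints ?d)\<^sup>2 + ?e\<^sup>2)"
      unfolding attained by (rule cINF_lower) (auto intro: bdd_belowI2[where m=0])
    show "sqrt ((dist_Ints ?d)\<^sup>2 + ?e\<^sup>2) \<le> (INF k. sqrt ((?d - of_int k)\<^sup>2 + ?e\<^sup>2))"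
      by (rule cINF_greatest) (use lower in auto)
  qed
qed

lemma cdist_cpt: "cdist (cpt u v) (cpt u' v') = sqrt ((dist_Ints (u - u'))\<^sup>2 + (v - v')\<^sup>2)"
proof -
  have "(frac u - frac u') - (u - u') = (frac u - u) - (frac u' - u')" by simp
  also have "\<dots> \<in> \<int>" by (simp add: frac_def)
  finally have "dist_Ints (frac u - frac u') = dist_Ints (u - u')" by (rule dist_Ints_cong)
  then show ?thesis by (simp add: cdist_eq)
qed

section \<open>Geodesics are circles and helices\<close>

lemma proportional_if_dist_eq_diff_norms:
  fixes p q P Q \<sigma> \<tau> :: real
  assumes "p\<^sup>2 + q\<^sup>2 = \<sigma>\<^sup>2" "P\<^sup>2 + Q\<^sup>2 = \<tau>\<^sup>2" "(p - P)\<^sup>2 + (q - Q)\<^sup>2 = (\<sigma> - \<tau>)\<^sup>2"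
  shows "p * \<tau> = \<sigma> * P \<and> q * \<tau> = \<sigma> * Q"
proof -
  have inner: "p * P + q * Q = \<sigma> * \<tau>"
    using assms unfolding power2_diff by linarith
  have "(p * \<tau> - \<sigma> * P)\<^sup>2 + (q * \<tau> - \<sigma> * Q)\<^sup>2
      = \<tau>\<^sup>2 * (p\<^sup>2 + q\<^sup>2) - 2 * \<sigma> * \<tau> * (p * P + q * Q) + \<sigma>\<^sup>2 * (P\<^sup>2 + Q\<^sup>2)"
    by (simp add: power2_eq_square algebra_simps)
  also have "\<dots> = 0"
    unfolding inner assms(1,2) by (simp add: power2_eq_square algebra_simps)
  finally show ?thesis by simp
qed

lemma isometric_interval_plane_affine:
  fixes L M :: "real \<Rightarrow> real"
  assumes iso: "\<And>s s'. s \<in> ball t e \<Longrightarrow> s' \<in> ball t e \<Longrightarrow>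
      (L s - L s')\<^sup>2 + (M s - M s')\<^sup>2 = (s - s')\<^sup>2"
    and "e > 0"
  shows "\<exists>a b. a\<^sup>2 + b\<^sup>2 = 1 \<and> (\<forall>s\<in>ball t e. L s = L t + a * (s - t) \<and> M s = M t + b * (s - t))"
proof -
  define \<tau> where "\<tau> = e / 2"
  have \<tau>: "\<tau> \<noteq> 0" "t \<in> ball t e" "t + \<tau> \<in> ball t e"
    using \<open>e > 0\<close> by (auto simp: \<tau>_def dist_real_def)
  define a where "a = (L (t + \<tau>) - L t) / \<tau>"
  define b where "b = (M (t + \<tau>) - M t) / \<tau>"
  have step: "(L (t + \<tau>) - L t)\<^sup>2 + (M (t + \<tau>) - M t)\<^sup>2 = \<tau>\<^sup>2"
    using iso[OF \<tau>(3,2)] by simp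
  then have "a\<^sup>2 + b\<^sup>2 = 1"
    using \<tau>(1) by (simp add: a_def b_def power_divide add_divide_distrib[symmetric])
  moreover have "L s = L t + a * (s - t) \<and> M s = M t + b * (s - t)" if s: "s \<in> ball t e" for s
  proof -
    have "(L s - L t)\<^sup>2 + (M s - M t)\<^sup>2 = (s - t)\<^sup>2"
      using iso[OF s \<tau>(2)] .
    moreover have "((L s - L t) - (L (t + \<tau>) - L t))\<^sup>2 + ((M s - M t) - (M (t + \<tau>) - M t))\<^sup>2
        = ((s - t) - \<tau>)\<^sup>2"
      using iso[OF s \<tau>(3)] by (simp add: algebra_simps)
    ultimately have "(L s - L t) * \<tau> = (s - t) * (L (t + \<tau>) - L t)
        \<and> (M s - M t) * \<tau> = (s - t) * (M (t + \<tau>) - M t)"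
      using step by (intro proportional_if_dist_eq_diff_norms)
    then show ?thesis using \<tau>(1) by (simp add: a_def b_def field_simps)
  qed
  ultimately show ?thesis by blast
qed

definition cyl_line :: "real \<Rightarrow> real \<Rightarrow> real \<Rightarrow> real \<Rightarrow> real \<Rightarrow> cyl" where
  "cyl_line x y a b s = cpt (x + a * s) (y + b * s)"

lemma isometric_interval_cylinder_lift:
  fixes X Y :: "real \<Rightarrow> real"
  assumes iso: "\<And>s s'. s \<in> ball t e \<Longrightarrow> s' \<in> ball t e \<Longrightarrow>
      (dist_Ints (X s - X s'))\<^sup>2 + (Y s - Y s')\<^sup>2 = (s - s')\<^sup>2"
    and "e \<le> 1/4"
  obtains L where "\<And>s. X s - L s \<in> \<int>"
    and "\<And>s s'. s \<in> ball t e \<Longrightarrow> s' \<in> ball t e \<Longrightarrow> (L s - L s')\<^sup>2 + (Y s - Y s')\<^sup>2 = (s - s')\<^sup>2"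
proof
  define L where "L s = X s - of_int (round (X s - X t))" for s
  show "X s - L s \<in> \<int>" for s
    by (simp add: L_def)
  txt \<open>The lift moves by less than \<open>1/4\<close> on the ball, so distances to \<open>\<int>\<close> between its
    values are absolute values.\<close>
  have L_near: "\<bar>L s - L t\<bar> < 1/4" if "s \<in> ball t e" for s
  proof -
    have "\<bar>L s - L t\<bar> = dist_Ints (X s - X t)"
      by (simp add: L_def dist_Ints_def)
    also have "\<dots> \<le> \<bar>s - t\<bar>"
    proof -
      have "t \<in> ball t e"
        using that zero_le_dist[of t s] by (simp del: zero_le_dist)
      then have "(dist_Ints (X s - X t))\<^sup>2 \<le> (s - t)\<^sup>2"
        using iso[OF that] by (metis le_add_same_cancel1 zero_le_power2)
      then show ?thesis
        using abs_le_square_iff[of "dist_Ints (X s - X t)" "s - t"] dist_Ints_nonneg by simp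
    qed
    also have "\<dots> < 1/4"
      using that \<open>e \<le> 1/4\<close> by (simp add: dist_real_def abs_minus_commute)
    finally show ?thesis .
  qed
  show "(L s - L s')\<^sup>2 + (Y s - Y s')\<^sup>2 = (s - s')\<^sup>2" if "s \<in> ball t e" "s' \<in> ball t e" for s s'
  proof -
    have "(X s - X s') - (L s - L s') \<in> \<int>"
      by (simp add: L_def)
    then have "dist_Ints (X s - X s') = dist_Ints (L s - L s')"
      by (rule dist_Ints_cong)
    also have "\<dots> = \<bar>L s - L s'\<bar>"
      using L_near[OF that(1)] L_near[OF that(2)] by (intro dist_Ints_eq_abs) linarith
    finally show ?thesis using iso[OF that] by simp
  qed
qed

lemma loc_isom_immersion_locally_cyl_line:
  assumes "loc_isom_immersion \<gamma>"
  shows "\<exists>e>0. \<exists>x y a b. a\<^sup>2 + b\<^sup>2 = 1 \<and> (\<forall>s\<in>ball t e. \<gamma> s = cyl_line x y a b s)"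
proof -
  obtain e0 where "e0 > 0" and iso0: "\<forall>s\<in>ball t e0. \<forall>s'\<in>ball t e0. cdist (\<gamma> s) (\<gamma> s') = dist s s'"
    using assms unfolding loc_isom_immersion_def by blast
  define e where "e = min e0 (1/4)"
  have "e > 0" "e \<le> 1/4" using \<open>e0 > 0\<close> by (simp_all add: e_def)
  have "(dist_Ints (cx (\<gamma> s) - cx (\<gamma> s')))\<^sup>2 + (cy (\<gamma> s) - cy (\<gamma> s'))\<^sup>2 = (s - s')\<^sup>2"
    if "s \<in> ball t e" "s' \<in> ball t e" for s s'
  proof -
    have "sqrt ((dist_Ints (cx (\<gamma> s) - cx (\<gamma> s')))\<^sup>2 + (cy (\<gamma> s) - cy (\<gamma> s'))\<^sup>2) = \<bar>s - s'\<bar>"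
      using iso0 that by (simp add: e_def cdist_eq dist_real_def)
    then show ?thesis by (metis real_sqrt_abs real_sqrt_eq_iff)
  qed
  then obtain L where L_cong: "\<And>s. cx (\<gamma> s) - L s \<in> \<int>" and lift_iso:
    "\<And>s s'. s \<in> ball t e \<Longrightarrow> s' \<in> ball t e \<Longrightarrow> (L s - L s')\<^sup>2 + (cy (\<gamma> s) - cy (\<gamma> s'))\<^sup>2 = (s - s')\<^sup>2"
    using isometric_interval_cylinder_lift[where X = "\<lambda>s. cx (\<gamma> s)" and Y = "\<lambda>s. cy (\<gamma> s)"]
      \<open>e \<le> 1/4\<close> by blast
  then obtain a b where "a\<^sup>2 + b\<^sup>2 = 1" and
    line: "\<forall>s\<in>ball t e. L s = L t + a * (s - t) \<and> cy (\<gamma> s) = cy (\<gamma> t) + b * (s - t)"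
    using isometric_interval_plane_affine[where M = "\<lambda>s. cy (\<gamma> s)", OF lift_iso \<open>e > 0\<close>]
    by blast
  have "\<gamma> s = cyl_line (L t - a * t) (cy (\<gamma> t) - b * t) a b s" if "s \<in> ball t e" for s
  proof -
    have "\<gamma> s = cpt (L s) (cy (\<gamma> s))"
      using L_cong[of s] cpt_cx_cy[of "\<gamma> s"] by (metis cpt_eq_iff)
    moreover have "L s = L t + a * (s - t)" "cy (\<gamma> s) = cy (\<gamma> t) + b * (s - t)"
      using line that by auto
    ultimately show ?thesis by (simp add: cyl_line_def algebra_simps)
  qed
  with \<open>e > 0\<close> \<open>a\<^sup>2 + b\<^sup>2 = 1\<close> show ?thesis by blast
qed

lemma mult_eq_0_if_Ints_near_0:
  fixes m r :: real
  assumes "r > 0" "\<And>d. 0 < d \<Longrightarrow> d < r \<Longrightarrow> m * d \<in> \<int>"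
  shows "m = 0"
proof (rule ccontr)
  assume "m \<noteq> 0"
  define d where "d = min (r/2) (1 / (2 * \<bar>m\<bar>))"
  have d: "0 < d" "d < r" "d \<le> 1 / (2 * \<bar>m\<bar>)"
    using \<open>r > 0\<close> \<open>m \<noteq> 0\<close> by (auto simp: d_def)
  have "\<bar>m * d\<bar> = \<bar>m\<bar> * d"
    using d by (simp add: abs_mult)
  also have "\<dots> \<le> \<bar>m\<bar> * (1 / (2 * \<bar>m\<bar>))"
    using d by (intro mult_left_mono) auto
  also have "\<dots> < 1" using \<open>m \<noteq> 0\<close> by simp
  finally have "m * d = 0"
    using assms(2)[OF d(1,2)] by (intro Ints_nonzero_abs_less1)
  with \<open>m \<noteq> 0\<close> d show False by simp
qed

lemma cyl_line_params_eq:
  assumes "r > 0" and agree: "\<And>s. s \<in> ball t r \<Longrightarrow> cyl_line x y a b s = cyl_line x' y' a' b' s"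
  shows "x - x' \<in> \<int> \<and> y = y' \<and> a = a' \<and> b = b'"
proof -
  have agree': "(x - x') + (a - a') * s \<in> \<int> \<and> y + b * s = y' + b' * s" if "s \<in> ball t r" for s
    using agree[OF that] by (simp add: cyl_line_def cpt_eq_iff algebra_simps)
  have t: "t \<in> ball t r" and t': "t + r/2 \<in> ball t r"
    using \<open>r > 0\<close> by (auto simp: dist_real_def)
  have "(b - b') * (r/2) = (y + b * (t + r/2)) - (y' + b' * (t + r/2)) - ((y + b * t) - (y' + b' * t))"
    by (simp add: field_simps)
  also have "\<dots> = 0"
    using agree'[OF t] agree'[OF t'] by simp
  finally have "b = b'" "y = y'"
    using agree'[OF t] \<open>r > 0\<close> by auto
  moreover have "a - a' = 0"
  proof (rule mult_eq_0_if_Ints_near_0[OF \<open>r > 0\<close>])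
    fix d assume "0 < d" "d < r"
    then have "t + d \<in> ball t r" by (simp add: dist_real_def)
    have "(a - a') * d = ((x - x') + (a - a') * (t + d)) - ((x - x') + (a - a') * t)"
      by (simp add: algebra_simps)
    also have "\<dots> \<in> \<int>"
      using agree'[OF \<open>t + d \<in> ball t r\<close>] agree'[OF t] by (intro Ints_diff) auto
    finally show "(a - a') * d \<in> \<int>" .
  qed
  moreover have "x - x' \<in> \<int>"
    using agree'[OF t] calculation by simp
  ultimately show ?thesis by simp
qed

lemma cyl_line_eq_if_agree_on_ball:
  assumes "r > 0" "\<And>s. s \<in> ball t r \<Longrightarrow> cyl_line x y a b s = cyl_line x' y' a' b' s"
  shows "cyl_line x y a b = cyl_line x' y' a' b'"
proof
  fix s
  have "x - x' \<in> \<int>" "y = y'" "a = a'" "b = b'"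
    using cyl_line_params_eq[OF assms] by auto
  then show "cyl_line x y a b s = cyl_line x' y' a' b' s"
    by (simp add: cyl_line_def cpt_eq_iff)
qed

lemma locally_constant_real_imp_constant:
  fixes g :: "real \<Rightarrow> 'a"
  assumes "\<And>t. \<exists>e>0. \<forall>s\<in>ball t e. g s = g t"
  shows "g s = g t"
proof -
  have "\<forall>a\<in>UNIV. eventually (\<lambda>b. g a = g b) (at a within UNIV)"
  proof
    fix a :: real
    obtain e where "e > 0" "\<forall>s\<in>ball a e. g s = g a" using assms by blast
    then show "eventually (\<lambda>b. g a = g b) (at a within UNIV)"
      unfolding eventually_at by (metis dist_commute mem_ball)
  qed
  from connected_local_const[OF connected_UNIV UNIV_I UNIV_I this] show ?thesis by metis
qed

lemma loc_isom_immersion_imp_cyl_line: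
  assumes "loc_isom_immersion \<gamma>"
  shows "\<exists>x y a b. a\<^sup>2 + b\<^sup>2 = 1 \<and> \<gamma> = cyl_line x y a b"
proof -
  obtain E X Y A B where local_line: "\<And>t. E t > 0 \<and> (A t)\<^sup>2 + (B t)\<^sup>2 = 1 \<and>
      (\<forall>s\<in>ball t (E t). \<gamma> s = cyl_line (X t) (Y t) (A t) (B t) s)"
    using loc_isom_immersion_locally_cyl_line[OF assms] by metis
  define \<Lambda> where "\<Lambda> t = cyl_line (X t) (Y t) (A t) (B t)" for t
  have "\<Lambda> t' = \<Lambda> t" if "t' \<in> ball t (E t)" for t t'
  proof -
    define r where "r = min (E t') (E t - dist t t')"
    have "r > 0" using that local_line[of t'] by (simp add: r_def)
    moreover have "\<Lambda> t' s = \<Lambda> t s" if "s \<in> ball t' r" for s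
    proof -
      have "s \<in> ball t' (E t')" "s \<in> ball t (E t)"
        using that dist_triangle[of t s t'] by (auto simp: r_def)
      then show ?thesis using local_line[of t] local_line[of t'] unfolding \<Lambda>_def by metis
    qed
    ultimately show ?thesis
      unfolding \<Lambda>_def by (rule cyl_line_eq_if_agree_on_ball)
  qed
  then have "\<Lambda> t = \<Lambda> 0" for t
    using local_line by (intro locally_constant_real_imp_constant) blast
  moreover have "\<gamma> t = \<Lambda> t t" for t
    using local_line[of t] by (simp add: \<Lambda>_def)
  ultimately have "\<gamma> = \<Lambda> 0" by (intro ext) metis
  then show ?thesis using local_line[of 0] by (auto simp: \<Lambda>_def)
qed

definition circle :: "real \<Rightarrow> cyl set" where
  "circle y = {p. cy p = y}"

definition helix :: "real \<Rightarrow> real \<Rightarrow> cyl set" where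
  "helix x c = {p. cx p - x - c * cy p \<in> \<int>}"

lemma mem_circle [simp]: "p \<in> circle y \<longleftrightarrow> cy p = y"
  by (simp add: circle_def)

lemma mem_helix_cpt [simp]: "cpt u v \<in> helix x c \<longleftrightarrow> u - x - c * v \<in> \<int>"
proof -
  have "cpt u v \<in> helix x c \<longleftrightarrow> frac u - x - c * v \<in> \<int>"
    by (simp add: helix_def)
  also have "frac u - x - c * v = (u - x - c * v) - of_int \<lfloor>u\<rfloor>"
    by (simp add: frac_def)
  also have "\<dots> \<in> \<int> \<longleftrightarrow> u - x - c * v \<in> \<int>"
    by (rule diff_in_Ints_iff_right) simp
  finally show ?thesis .
qed

lemma mem_helix: "p \<in> helix x c \<longleftrightarrow> cx p - x - c * cy p \<in> \<int>"
  by (simp add: helix_def)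

lemma loc_isom_immersion_cyl_line:
  assumes "a\<^sup>2 + b\<^sup>2 = 1"
  shows "loc_isom_immersion (cyl_line x y a b)"
  unfolding loc_isom_immersion_def
proof (intro allI exI[of _ "1/4"] conjI ballI)
  fix t s s' :: real
  assume "s \<in> ball t (1/4)" "s' \<in> ball t (1/4)"
  then have "\<bar>s - s'\<bar> \<le> 1/2" unfolding mem_ball dist_real_def by arith
  moreover have "\<bar>a\<bar> \<le> 1"
    using assms by (metis abs_square_le_1 le_add_same_cancel1 zero_le_power2)
  then have "\<bar>a * (s - s')\<bar> \<le> \<bar>s - s'\<bar>"
    by (simp add: abs_mult mult_left_le_one_le)
  ultimately have small: "dist_Ints (a * (s - s')) = \<bar>a * (s - s')\<bar>"
    by (intro dist_Ints_eq_abs) linarith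
  have "cdist (cyl_line x y a b s) (cyl_line x y a b s')
      = sqrt ((dist_Ints (a * (s - s')))\<^sup>2 + (b * (s - s'))\<^sup>2)"
    by (simp add: cyl_line_def cdist_cpt right_diff_distrib)
  also have "\<dots> = sqrt ((a\<^sup>2 + b\<^sup>2) * (s - s')\<^sup>2)"
    unfolding small by (simp add: power_mult_distrib distrib_right)
  finally show "cdist (cyl_line x y a b s) (cyl_line x y a b s') = dist s s'"
    using assms by (simp add: dist_real_def)
qed simp

lemma range_cyl_line_horizontal:
  assumes "a \<noteq> 0"
  shows "range (cyl_line x y a 0) = circle y"
proof (intro equalityI subsetI)
  fix p assume "p \<in> circle y"
  then have "p = cyl_line x y a 0 ((cx p - x) / a)"
    using assms cpt_cx_cy[of p] by (simp add: cyl_line_def)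
  then show "p \<in> range (cyl_line x y a 0)" by (rule range_eqI)
qed (auto simp: cyl_line_def)

lemma range_cyl_line_helix:
  assumes "b \<noteq> 0"
  shows "range (cyl_line x y a b) = helix (x - a * y / b) (a / b)"
proof (intro equalityI subsetI)
  fix p assume "p \<in> range (cyl_line x y a b)"
  then obtain s where "p = cpt (x + a * s) (y + b * s)"
    by (auto simp: cyl_line_def)
  moreover have "x + a * s - (x - a * y / b) - a / b * (y + b * s) = 0"
    using assms by (simp add: field_simps)
  ultimately show "p \<in> helix (x - a * y / b) (a / b)" by simp
next
  fix p assume "p \<in> helix (x - a * y / b) (a / b)"
  then have "cx p - (x - a * y / b) - a / b * cy p \<in> \<int>"
    by (simp add: mem_helix)
  define s where "s = (cy p - y) / b"
  have "cx p - (x - a * y / b) - a / b * cy p = cx p - (x + a * s)"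
    using assms by (simp add: s_def field_simps)
  with \<open>cx p - (x - a * y / b) - a / b * cy p \<in> \<int>\<close>
  have "cx p - (x + a * s) \<in> \<int>" by metis
  moreover have "cy p = y + b * s"
    using assms by (simp add: s_def)
  ultimately have "p = cyl_line x y a b s"
    by (metis cpt_cx_cy cpt_eq_iff cyl_line_def)
  then show "p \<in> range (cyl_line x y a b)" by (rule range_eqI)
qed

lemma geodesic_iff: "geodesic G \<longleftrightarrow> (\<exists>y. G = circle y) \<or> (\<exists>x c. G = helix x c)"
proof
  assume "geodesic G"
  then obtain x y a b where "a\<^sup>2 + b\<^sup>2 = 1" "G = range (cyl_line x y a b)"
    unfolding geodesic_def using loc_isom_immersion_imp_cyl_line by metis
  moreover have "b = 0 \<Longrightarrow> a \<noteq> 0"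
    using \<open>a\<^sup>2 + b\<^sup>2 = 1\<close> by auto
  ultimately show "(\<exists>y. G = circle y) \<or> (\<exists>x c. G = helix x c)"
    using range_cyl_line_horizontal[of a x y] range_cyl_line_helix[of b x y a]
    by (cases "b = 0") auto
next
  have circle: "geodesic (circle y)" for y
    using loc_isom_immersion_cyl_line[of 1 0 0 y] range_cyl_line_horizontal[of 1 0 y]
    unfolding geodesic_def by auto
  have "geodesic (helix x c)" for x c
  proof -
    define L where "L = sqrt (1 + c\<^sup>2)"
    have "1 + c\<^sup>2 > 0"
      by (simp add: add_pos_nonneg)
    then have "L > 0" "L\<^sup>2 = 1 + c\<^sup>2" "1 + c\<^sup>2 \<noteq> 0"
      by (simp_all add: L_def)
    then have "(c / L)\<^sup>2 + (1 / L)\<^sup>2 = 1"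
      by (simp add: power_divide add_divide_distrib[symmetric])
    moreover have "range (cyl_line x 0 (c / L) (1 / L)) = helix x c"
      using range_cyl_line_helix[of "1 / L" x 0 "c / L"] \<open>L > 0\<close> by simp
    ultimately show ?thesis
      using loc_isom_immersion_cyl_line unfolding geodesic_def by metis
  qed
  with circle show "(\<exists>y. G = circle y) \<or> (\<exists>x c. G = helix x c) \<Longrightarrow> geodesic G"
    by blast
qed

section \<open>Incidence of circles and helices\<close>

lemma circle_Int_helix: "circle y \<inter> helix x c = {cpt (x + c * y) y}"
proof (intro equalityI subsetI)
  fix p assume "p \<in> circle y \<inter> helix x c"
  then have "cx p - (x + c * y) \<in> \<int>" "cy p = y"
    by (auto simp: mem_helix diff_diff_eq)
  then show "p \<in> {cpt (x + c * y) y}"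
    by (metis cpt_cx_cy cpt_eq_iff singletonI)
qed simp

lemma helix_parallel_eq:
  assumes "helix x c \<inter> helix x' c \<noteq> {}"
  shows "helix x c = helix x' c"
proof -
  obtain p where "cx p - x - c * cy p \<in> \<int>" "cx p - x' - c * cy p \<in> \<int>"
    using assms by (auto simp: mem_helix)
  then have "(cx p - x - c * cy p) - (cx p - x' - c * cy p) \<in> \<int>"
    by (rule Ints_diff)
  then have "x' - x \<in> \<int>" by simp
  then have "cx q - x - c * cy q \<in> \<int> \<longleftrightarrow> cx q - x' - c * cy q \<in> \<int>" for q
    using add_in_Ints_iff_right[of "x' - x" "cx q - x' - c * cy q"] by (simp add: algebra_simps)
  then show ?thesis by (auto simp: mem_helix)
qed

lemma helix_Int_helix_two_points:
  assumes "c \<noteq> c'"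
  shows "\<exists>p q. p \<noteq> q \<and> p \<in> helix x c \<inter> helix x' c' \<and> q \<in> helix x c \<inter> helix x' c'"
proof -
  define t where "t = (x' - x) / (c - c')"
  define u where "u = 1 / (c - c')"
  define t' where "t' = t + u"
  have "(c - c') * t = x' - x" "(c - c') * u = 1"
    using assms by (simp_all add: t_def u_def)
  then have "x + c * t - x' - c' * t = 0" "x + c * t' - x' - c' * t' = 1"
    by (simp_all add: t'_def algebra_simps)
  moreover have "t \<noteq> t'"
    using assms by (simp add: t'_def u_def)
  ultimately show ?thesis
    by (intro exI[of _ "cpt (x + c * t) t"] exI[of _ "cpt (x + c * t') t'"]) (simp add: cpt_eq_iff)
qed

lemma helix_slope_unique:
  assumes "helix x c = helix x' c'"
  shows "c = c'"
proof -
  have "cyl_line x 0 c 1 y = cyl_line x' 0 c' 1 y" for y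
  proof -
    have "cpt (x + c * y) y \<in> circle y \<inter> helix x' c'"
      unfolding assms[symmetric] by simp
    then show ?thesis
      unfolding circle_Int_helix by (simp add: cyl_line_def)
  qed
  then show ?thesis
    using cyl_line_params_eq[of 1 0 x 0 c 1 x' 0 c' 1] by simp
qed

lemma is_singleton_eq: "is_singleton A \<Longrightarrow> p \<in> A \<Longrightarrow> q \<in> A \<Longrightarrow> p = q"
  by (auto simp: is_singleton_def)

lemma not_is_singleton_circle_Int_circle: "\<not> is_singleton (circle y \<inter> circle y')"
proof
  assume singleton: "is_singleton (circle y \<inter> circle y')"
  then have "y = y'"
    by (auto simp: is_singleton_def)
  then have "cpt 0 y = cpt (1/2) y"
    by (intro is_singleton_eq[OF singleton]) simp_all
  then show False
    using half_notin_Ints by (simp add: cpt_eq_iff)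
qed

lemma not_is_singleton_helix_Int_helix: "\<not> is_singleton (helix x c \<inter> helix x' c')"
proof
  assume singleton: "is_singleton (helix x c \<inter> helix x' c')"
  show False
  proof (cases "c = c'")
    case True
    have "helix x c \<inter> helix x' c \<noteq> {}"
      using singleton True by (auto simp: is_singleton_def)
    then have "helix x c \<inter> helix x' c' = helix x c"
      using True helix_parallel_eq by blast
    moreover have "cpt x 0 \<in> helix x c" "cpt (x + c) 1 \<in> helix x c"
      by simp_all
    ultimately show False
      using is_singleton_eq[OF singleton, of "cpt x 0" "cpt (x + c) 1"] by (simp add: cpt_eq_iff)
  next
    case False
    then obtain p q where "p \<noteq> q" "p \<in> helix x c \<inter> helix x' c'" "q \<in> helix x c \<inter> helix x' c'"
      using helix_Int_helix_two_points by blast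
    then show False
      using is_singleton_eq[OF singleton] by blast
  qed
qed

section \<open>A functional equation modulo the integers\<close>

lemma additive_of_nat_mult:
  fixes M :: "real \<Rightarrow> real"
  assumes "Modules.additive M"
  shows "M (of_nat n * x) = of_nat n * M x"
proof -
  interpret Modules.additive M by fact
  show ?thesis by (induction n) (simp_all add: distrib_right add zero)
qed

lemma additive_Ints_valued_eq_0:
  fixes M :: "real \<Rightarrow> real"
  assumes "Modules.additive M" and Ints: "\<And>x. M x \<in> \<int>"
  shows "M x = 0"
proof -
  obtain n :: nat where n: "\<bar>M x\<bar> < real n"
    using reals_Archimedean2 by blast
  then have "real n > 0" by linarith
  then have M_x: "M x = real n * M (x / real n)"
    using additive_of_nat_mult[OF assms(1), of n "x / real n"] by simp
  then have "\<bar>M (x / real n)\<bar> < 1"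
    using n \<open>real n > 0\<close> by (simp add: abs_mult)
  then have "M (x / real n) = 0"
    using Ints by (intro Ints_nonzero_abs_less1)
  then show ?thesis using M_x by simp
qed

lemma real_additive_multiplicative_mono:
  fixes g :: "real \<Rightarrow> real"
  assumes "Modules.additive g" and mult: "\<And>x y. g (x * y) = g x * g y" and "y \<le> z"
  shows "g y \<le> g z"
proof -
  have "g (z - y) = (g (sqrt (z - y)))\<^sup>2"
    using \<open>y \<le> z\<close> mult[of "sqrt (z - y)" "sqrt (z - y)"] by (simp add: power2_eq_square)
  then show ?thesis
    using Modules.additive.diff[OF assms(1), of z y] by (metis diff_ge_0_iff_ge zero_le_power2)
qed

lemma real_additive_multiplicative_eq_id:
  fixes g :: "real \<Rightarrow> real"
  assumes "Modules.additive g" and mult: "\<And>x y. g (x * y) = g x * g y" and "g 1 = 1"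
  shows "g x = x"
proof -
  have g_of_int: "g (of_int k) = of_int k" for k
  proof (cases "k \<ge> 0")
    case True
    then show ?thesis
      using additive_of_nat_mult[OF assms(1), of "nat k" 1] \<open>g 1 = 1\<close> by simp
  next
    case False
    then show ?thesis
      using additive_of_nat_mult[OF assms(1), of "nat (- k)" 1] \<open>g 1 = 1\<close>
        Modules.additive.minus[OF assms(1), of "of_int (- k)"] by simp
  qed
  note mono = real_additive_multiplicative_mono[OF assms(1) mult]
  have g_Rats: "g q = q" if q: "q \<in> \<rat>" for q
  proof -
    obtain a b where "b > 0" "q = of_int a / of_int b"
      using Rats_cases'[OF q] by blast
    then have "g q * of_int b = q * of_int b"
      using mult[of q "of_int b"] g_of_int by simp
    then show ?thesis using \<open>b > 0\<close> by simp
  qed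
  show ?thesis
  proof (rule ccontr)
    assume "g x \<noteq> x"
    then consider "g x < x" | "x < g x" by linarith
    then show False
    proof cases
      case 1
      then obtain q where "q \<in> \<rat>" "g x < q" "q < x" using Rats_dense_in_real by blast
      then show False using mono[of q x] g_Rats by simp
    next
      case 2
      then obtain q where "q \<in> \<rat>" "x < q" "q < g x" using Rats_dense_in_real by blast
      then show False using mono[of x q] g_Rats by simp
    qed
  qed
qed

(* If f (cpt u v) = cpt (F u v) (h v) and f maps helix x c onto helix (psi x c) (sigma c), then
   F (x + c t) t = psi x c + sigma c * h t mod 1; subtracting the instances with c = 0 and with
   t = 0 gives the cocycle below for phi x = psi x 0, tau = sigma - sigma 0, H = h - h 0. *)
locale Ints_cocycle =
  fixes \<phi> \<tau> H :: "real \<Rightarrow> real"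
  assumes cocycle: "\<phi> (x + c * t) - \<phi> x - \<tau> c * H t \<in> \<int>"
    and surj_H: "surj H"
    and \<tau>_1: "\<tau> 1 \<noteq> 0"
    and H_1: "H 1 \<noteq> 0"
begin

lemma cocycle_0: "\<phi> (c * t) - \<phi> 0 - \<tau> c * H t \<in> \<int>"
  using cocycle[of 0] by simp

lemma \<tau>_add: "\<tau> (c + c') = \<tau> c + \<tau> c'"
proof (rule ccontr)
  define r where "r = \<tau> (c + c') - \<tau> c - \<tau> c'"
  assume "\<tau> (c + c') \<noteq> \<tau> c + \<tau> c'"
  then have "r \<noteq> 0" by (simp add: r_def)
  obtain t where t: "H t = 1 / (2 * r)"
    using surj_H by (metis surjD)
  have "r * H t = (\<phi> (c * t) - \<phi> 0 - \<tau> c * H t) + (\<phi> (c * t + c' * t) - \<phi> (c * t) - \<tau> c' * H t)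
      - (\<phi> ((c + c') * t) - \<phi> 0 - \<tau> (c + c') * H t)"
    by (simp add: r_def algebra_simps)
  also have "\<dots> \<in> \<int>"
    by (intro cocycle_0 cocycle Ints_add Ints_diff)
  finally show False
    using \<open>r \<noteq> 0\<close> half_notin_Ints by (simp add: t)
qed

lemma H_add: "H (t + t') = H t + H t'"
proof -
  define D where "D = H (t + t') - H t - H t'"
  have "Modules.additive (\<lambda>c. \<tau> c * D)"
    by unfold_locales (simp add: \<tau>_add distrib_right)
  moreover have "\<tau> c * D \<in> \<int>" for c
  proof -
    have "\<tau> c * D = (\<phi> (c * t) - \<phi> 0 - \<tau> c * H t) + (\<phi> (c * t + c * t') - \<phi> (c * t) - \<tau> c * H t')
        - (\<phi> (c * (t + t')) - \<phi> 0 - \<tau> c * H (t + t'))"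
      by (simp add: D_def algebra_simps)
    also have "\<dots> \<in> \<int>"
      by (intro cocycle_0 cocycle Ints_add Ints_diff)
    finally show ?thesis .
  qed
  ultimately have "\<tau> 1 * D = 0"
    by (rule additive_Ints_valued_eq_0)
  then show ?thesis using \<tau>_1 by (simp add: D_def)
qed

lemma \<tau>_H_symmetric: "\<tau> c * H t = \<tau> t * H c"
proof -
  have "Modules.additive (\<lambda>c. \<tau> c * H t - \<tau> t * H c)"
    by unfold_locales (simp add: \<tau>_add H_add algebra_simps)
  moreover have "\<tau> c * H t - \<tau> t * H c \<in> \<int>" for c
  proof -
    have "\<tau> c * H t - \<tau> t * H c = (\<phi> (t * c) - \<phi> 0 - \<tau> t * H c) - (\<phi> (c * t) - \<phi> 0 - \<tau> c * H t)"
      by (simp add: algebra_simps)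
    also have "\<dots> \<in> \<int>"
      by (intro cocycle_0 Ints_diff)
    finally show ?thesis .
  qed
  ultimately show ?thesis
    using additive_Ints_valued_eq_0 by fastforce
qed

lemma H_mult: "H (c * t) * H 1 = H c * H t"
proof -
  define \<kappa> where "\<kappa> = \<tau> 1 / H 1"
  have \<tau>_eq: "\<tau> c = \<kappa> * H c" for c
    using \<tau>_H_symmetric[of c 1] H_1 by (simp add: \<kappa>_def field_simps)
  have "Modules.additive (\<lambda>c. \<kappa> * (H c * H t - H (c * t) * H 1))"
    by unfold_locales (simp add: H_add algebra_simps)
  moreover have "\<kappa> * (H c * H t - H (c * t) * H 1) \<in> \<int>" for c
  proof -
    have "\<kappa> * (H c * H t - H (c * t) * H 1)
        = (\<phi> ((c * t) * 1) - \<phi> 0 - \<tau> (c * t) * H 1) - (\<phi> (c * t) - \<phi> 0 - \<tau> c * H t)"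
      by (simp add: \<tau>_eq algebra_simps)
    also have "\<dots> \<in> \<int>"
      by (intro cocycle_0 Ints_diff)
    finally show ?thesis .
  qed
  ultimately have "\<kappa> * (H c * H t - H (c * t) * H 1) = 0"
    by (rule additive_Ints_valued_eq_0)
  moreover have "\<kappa> \<noteq> 0"
    using \<tau>_1 H_1 by (simp add: \<kappa>_def)
  ultimately show ?thesis by simp
qed

lemma H_linear: "H t = H 1 * t"
proof -
  have "H t / H 1 = t"
  proof (rule real_additive_multiplicative_eq_id)
    show "Modules.additive (\<lambda>t. H t / H 1)"
      by unfold_locales (simp add: H_add add_divide_distrib)
    show "H (x * y) / H 1 = H x / H 1 * (H y / H 1)" for x y
      using H_mult[of x y] H_1 by (simp add: field_simps power2_eq_square)
  qed (simp add: H_1)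
  then show ?thesis using H_1 by (simp add: field_simps)
qed

lemma \<tau>_linear: "\<tau> c = \<tau> 1 * c"
  using \<tau>_H_symmetric[of c 1] H_linear[of c] H_1
  by (metis mult.commute mult.left_commute mult_right_cancel)

lemma \<phi>_affine: "\<phi> x - \<phi> 0 - \<tau> 1 * H 1 * x \<in> \<int>"
proof -
  have "\<phi> x - \<phi> 0 - \<tau> 1 * H 1 * x = \<phi> (x * 1) - \<phi> 0 - \<tau> x * H 1"
    by (simp add: \<tau>_linear[of x])
  also have "\<dots> \<in> \<int>"
    by (rule cocycle_0)
  finally show ?thesis .
qed

end

section \<open>Geodesic-preserving bijections\<close>

locale geodesic_preserving_map =
  fixes f :: "cyl \<Rightarrow> cyl"
  assumes geodesic_preserving: "geodesic_preserving f"
begin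

lemma inj_f: "inj f" and surj_f: "surj f"
  using geodesic_preserving by (simp_all add: geodesic_preserving_def bij_def)

lemma image_geodesic:
  assumes "geodesic G"
  shows "(\<exists>y. f ` G = circle y) \<or> (\<exists>x c. f ` G = helix x c)"
  using geodesic_preserving assms unfolding geodesic_preserving_def geodesic_iff[symmetric] by blast

lemma is_singleton_image_Int_iff: "is_singleton (f ` A \<inter> f ` B) \<longleftrightarrow> is_singleton (A \<inter> B)"
  by (metis card_image image_Int inj_f inj_on_subset is_singleton_altdef subset_UNIV)

lemma is_singleton_image_circle_Int_helix: "is_singleton (f ` circle y \<inter> f ` helix x c)"
  unfolding is_singleton_image_Int_iff circle_Int_helix by simp

lemma image_circle: "\<exists>z. f ` circle y = circle z"
proof (rule ccontr)
  assume "\<nexists>z. f ` circle y = circle z"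
  then obtain x0 c0 where circle_to_helix: "f ` circle y = helix x0 c0"
    using image_geodesic geodesic_iff by blast
  have helix_to_circle: "\<exists>z. f ` helix x c = circle z" for x c
  proof -
    have "geodesic (helix x c)"
      by (auto simp: geodesic_iff)
    then consider (circle) z where "f ` helix x c = circle z"
      | (helix) x' c' where "f ` helix x c = helix x' c'"
      using image_geodesic by blast
    then show ?thesis
    proof cases
      case helix
      then have "is_singleton (helix x0 c0 \<inter> helix x' c')"
        using is_singleton_image_circle_Int_helix[of y x c] circle_to_helix by simp
      then show ?thesis
        using not_is_singleton_helix_Int_helix by blast
    qed blast
  qed
  obtain z0 z1 where z0: "f ` helix 0 0 = circle z0" and z1: "f ` helix 0 1 = circle z1"
    using helix_to_circle by meson
  have "cpt 0 0 \<in> helix 0 0" "cpt 0 0 \<in> helix 0 1"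
    by simp_all
  then have "f (cpt 0 0) \<in> circle z0" "f (cpt 0 0) \<in> circle z1"
    unfolding z0[symmetric] z1[symmetric] by blast+
  then have "f ` helix 0 0 = f ` helix 0 1"
    using z0 z1 by simp
  then have "helix 0 0 = helix 0 (1 :: real)"
    using inj_f by (simp add: inj_image_eq_iff)
  then show False
    using helix_slope_unique[of 0 0 0 1] by simp
qed

lemma image_helix: "\<exists>x' c'. f ` helix x c = helix x' c'"
proof -
  obtain z where z: "f ` circle 0 = circle z"
    using image_circle by blast
  have "geodesic (helix x c)"
    by (auto simp: geodesic_iff)
  then consider (circle) z' where "f ` helix x c = circle z'"
    | (helix) x' c' where "f ` helix x c = helix x' c'"
    using image_geodesic by blast
  then show ?thesis
  proof cases
    case circle
    then have "is_singleton (circle z \<inter> circle z')"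
      using is_singleton_image_circle_Int_helix[of 0 x c] z by simp
    then show ?thesis
      using not_is_singleton_circle_Int_circle by blast
  qed blast
qed

definition height :: "real \<Rightarrow> real" where
  "height y = cy (f (cpt 0 y))"

lemma image_circle_eq: "f ` circle y = circle (height y)"
proof -
  obtain z where z: "f ` circle y = circle z"
    using image_circle by blast
  moreover have "f (cpt 0 y) \<in> f ` circle y"
    by simp
  ultimately have "z = height y"
    by (simp add: height_def)
  with z show ?thesis by simp
qed

lemma cy_f: "cy (f p) = height (cy p)"
proof -
  have "f p \<in> f ` circle (cy p)" by simp
  then show ?thesis by (simp add: image_circle_eq)
qed

lemma inj_height: "inj height"
proof (rule injI)
  fix y y' assume "height y = height y'"
  then have "circle y = circle y'"
    using inj_f by (metis image_circle_eq inj_image_eq_iff)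
  then show "y = y'"
    by (metis cy_cpt mem_circle)
qed

lemma surj_height: "surj height"
proof -
  have "z \<in> range height" for z
  proof -
    obtain p where "f p = cpt 0 z"
      using surj_f by (metis surjD)
    then have "z = height (cy p)"
      using cy_f[of p] by simp
    then show ?thesis by blast
  qed
  then show ?thesis by blast
qed

lemma image_helix_eq: "\<exists>\<psi> \<sigma>. inj \<sigma> \<and> (\<forall>x c. f ` helix x c = helix (\<psi> x c) (\<sigma> c))"
proof -
  obtain \<psi> \<sigma> where img: "\<And>x c. f ` helix x c = helix (\<psi> x c) (\<sigma> x c)"
    using image_helix by metis
  have slope_indep: "\<sigma> x c = \<sigma> 0 c" for x c
  proof (rule ccontr)
    assume "\<sigma> x c \<noteq> \<sigma> 0 c"
    then obtain p where "p \<in> helix (\<psi> x c) (\<sigma> x c) \<inter> helix (\<psi> 0 c) (\<sigma> 0 c)"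
      using helix_Int_helix_two_points by blast
    then have "p \<in> f ` (helix x c \<inter> helix 0 c)"
      by (simp add: image_Int[OF inj_f] img)
    then have "helix x c = helix 0 c"
      by (intro helix_parallel_eq) blast
    then show False
      using img helix_slope_unique \<open>\<sigma> x c \<noteq> \<sigma> 0 c\<close> by metis
  qed
  have "inj (\<sigma> 0)"
  proof (rule injI)
    fix c c' assume "\<sigma> 0 c = \<sigma> 0 c'"
    moreover have "f (cpt 0 0) \<in> helix (\<psi> 0 c) (\<sigma> 0 c) \<inter> helix (\<psi> 0 c') (\<sigma> 0 c')"
      using img[of 0 c, symmetric] img[of 0 c', symmetric] by simp
    ultimately have "helix (\<psi> 0 c) (\<sigma> 0 c) = helix (\<psi> 0 c') (\<sigma> 0 c)"
      by (intro helix_parallel_eq) auto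
    then have "f ` helix 0 c = f ` helix 0 c'"
      by (simp add: img \<open>\<sigma> 0 c = \<sigma> 0 c'\<close>)
    then have "helix 0 c = helix 0 c'"
      using inj_f by (simp add: inj_image_eq_iff)
    then show "c = c'"
      by (rule helix_slope_unique)
  qed
  then show ?thesis
    using img slope_indep by metis
qed

lemma affine_coordinates:
  "\<exists>l \<alpha> \<beta> A B. A \<noteq> 0 \<and> (\<forall>u v. f (cpt u v) = cpt (l * u + \<alpha> * v + \<beta>) (A * v + B))"
proof -
  obtain \<psi> \<sigma> where "inj \<sigma>" and img: "\<And>x c. f ` helix x c = helix (\<psi> x c) (\<sigma> c)"
    using image_helix_eq by blast
  have cong: "cx (f (cpt (x + c * t) t)) - \<psi> x c - \<sigma> c * height t \<in> \<int>" for x c t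
  proof -
    have "f (cpt (x + c * t) t) \<in> helix (\<psi> x c) (\<sigma> c)"
      using img[of x c, symmetric] by simp
    then show ?thesis by (simp add: mem_helix cy_f)
  qed
  define \<phi> where "\<phi> x = \<psi> x 0" for x
  define \<tau> where "\<tau> c = \<sigma> c - \<sigma> 0" for c
  define H where "H t = height t - height 0" for t
  have cong_0: "cx (f (cpt u t)) - \<phi> u - \<sigma> 0 * height t \<in> \<int>" for u t
    using cong[of u 0 t] by (simp add: \<phi>_def)
  interpret Ints_cocycle \<phi> \<tau> H
  proof
    fix x c t
    have "\<phi> (x + c * t) - \<phi> x - \<tau> c * H t
        = ((cx (f (cpt (x + c * t) t)) - \<psi> x c - \<sigma> c * height t)
            - (cx (f (cpt (x + c * t) t)) - \<phi> (x + c * t) - \<sigma> 0 * height t))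
          - ((cx (f (cpt (x + c * 0) 0)) - \<psi> x c - \<sigma> c * height 0)
            - (cx (f (cpt x 0)) - \<phi> x - \<sigma> 0 * height 0))"
      by (simp add: \<tau>_def H_def algebra_simps)
    also have "\<dots> \<in> \<int>"
      by (intro cong cong_0 Ints_diff)
    finally show "\<phi> (x + c * t) - \<phi> x - \<tau> c * H t \<in> \<int>" .
  next
    show "surj H"
    proof (rule surjI)
      fix z
      show "H (inv height (z + height 0)) = z"
        using surj_height by (simp add: H_def surj_f_inv_f)
    qed
    show "\<tau> 1 \<noteq> 0"
      using \<open>inj \<sigma>\<close> by (simp add: \<tau>_def inj_eq)
    show "H 1 \<noteq> 0"
      using inj_height by (simp add: H_def inj_eq)
  qed
  define l where "l = \<tau> 1 * H 1"
  define \<alpha> where "\<alpha> = \<sigma> 0 * H 1"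
  define \<beta> where "\<beta> = \<phi> 0 + \<sigma> 0 * height 0"
  have "f (cpt u v) = cpt (l * u + \<alpha> * v + \<beta>) (H 1 * v + height 0)" for u v
  proof -
    have height_v: "height v = H 1 * v + height 0"
      using H_linear[of v] by (simp add: H_def)
    have "cx (f (cpt u v)) - (l * u + \<alpha> * v + \<beta>)
        = (cx (f (cpt u v)) - \<phi> u - \<sigma> 0 * height v) + (\<phi> u - \<phi> 0 - \<tau> 1 * H 1 * u)"
      by (simp add: l_def \<alpha>_def \<beta>_def height_v algebra_simps)
    also have "\<dots> \<in> \<int>"
      by (intro Ints_add cong_0 \<phi>_affine)
    finally have "cpt (cx (f (cpt u v))) (cy (f (cpt u v))) = cpt (l * u + \<alpha> * v + \<beta>) (H 1 * v + height 0)"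
      by (simp add: cpt_eq_iff cy_f height_v)
    then show ?thesis by simp
  qed
  then show ?thesis
    using H_1 by blast
qed

end

lemma affine_cyl_map_unit_coeff:
  assumes "inj f" and f: "\<And>u v. f (cpt u v) = cpt (l * u + \<alpha> * v + \<beta>) (A * v + B)"
  shows "l = 1 \<or> l = -1"
proof -
  have "cpt 1 0 = cpt 0 0"
    by (simp add: cpt_eq_iff)
  have "cpt (l + \<beta>) B = f (cpt 1 0)"
    using f[of 1 0] by simp
  also have "\<dots> = f (cpt 0 0)"
    using \<open>cpt 1 0 = cpt 0 0\<close> by simp
  also have "\<dots> = cpt \<beta> B"
    using f[of 0 0] by simp
  finally have "cpt (l + \<beta>) B = cpt \<beta> B" .
  then have "l \<in> \<int>"
    by (simp add: cpt_eq_iff)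
  have "l \<noteq> 0"
  proof
    assume "l = 0"
    then have "f (cpt (1/2) 0) = f (cpt 0 0)"
      using f by simp
    then show False
      using \<open>inj f\<close> half_notin_Ints by (simp add: inj_eq cpt_eq_iff)
  qed
  then have "f (cpt (1 / l) 0) = f (cpt 0 0)"
    using f by (simp add: cpt_eq_iff)
  then have "1 / l \<in> \<int>"
    using \<open>inj f\<close> by (simp add: inj_eq cpt_eq_iff)
  then have "1 \<le> \<bar>1 / l\<bar>"
    using \<open>l \<noteq> 0\<close> by (intro Ints_nonzero_abs_ge1) simp_all
  then have "\<bar>l\<bar> \<le> 1"
    using \<open>l \<noteq> 0\<close> by (simp add: le_divide_eq)
  moreover have "1 \<le> \<bar>l\<bar>"
    using \<open>l \<in> \<int>\<close> \<open>l \<noteq> 0\<close> by (rule Ints_nonzero_abs_ge1)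
  ultimately show ?thesis by arith
qed

lemma reflection_translation_isometry:
  assumes l: "l = 1 \<or> l = -1"
  shows "cyl_isometry (\<lambda>p. cpt (l * cx p + \<beta>) (cy p))"
  unfolding cyl_isometry_def
proof
  let ?g = "\<lambda>p. cpt (l * cx p + \<beta>) (cy p)"
  have "l \<in> \<int>" and ll: "l * (l * x) = x" for x
    using l by auto
  have "inj ?g"
  proof (rule injI)
    fix p q assume "?g p = ?g q"
    then have "l * (cx p - cx q) \<in> \<int>" "cy p = cy q"
      by (simp_all add: cpt_eq_iff right_diff_distrib)
    then have "cx p - cx q \<in> \<int>"
      using Ints_mult[OF \<open>l \<in> \<int>\<close>] ll by metis
    then show "p = q"
      using \<open>cy p = cy q\<close> by (metis cpt_cx_cy cpt_eq_iff)
  qed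
  moreover have "?g (cpt (l * (cx q - \<beta>)) (cy q)) = q" for q
    by (simp add: cpt_mult_frac[OF \<open>l \<in> \<int>\<close>] ll)
  then have "surj ?g"
    by (rule surjI)
  ultimately show "bij ?g"
    by (simp add: bij_def)
  have "cdist (?g p) (?g q) = cdist p q" for p q
  proof -
    have "dist_Ints (l * cx p + \<beta> - (l * cx q + \<beta>)) = dist_Ints (cx p - cx q)"
      using l dist_Ints_minus[of "cx p - cx q"] by auto
    then show ?thesis
      unfolding cdist_cpt cdist_eq[of p q] by simp
  qed
  then show "\<forall>p q. cdist (?g p) (?g q) = cdist p q"
    by blast
qed

lemma decompose_affine_cyl_map:
  assumes l: "l = 1 \<or> l = -1" and "A \<noteq> 0"
    and f: "\<And>u v. f (cpt u v) = cpt (l * u + \<alpha> * v + \<beta>) (A * v + B)"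
  shows "\<exists>g a b \<alpha>. cyl_isometry g \<and> a \<noteq> 0 \<and> f = g \<circ> affine_R a b \<circ> twist \<alpha>"
proof -
  have "f = (\<lambda>p. cpt (l * cx p + \<beta>) (cy p)) \<circ> affine_R A B \<circ> twist (l * \<alpha>)"
  proof
    fix p
    have "l \<in> \<int>" and ll: "l * (l * x) = x" for x
      using l by auto
    have "((\<lambda>p. cpt (l * cx p + \<beta>) (cy p)) \<circ> affine_R A B \<circ> twist (l * \<alpha>)) p
        = cpt (l * frac (cx p + l * \<alpha> * cy p) + \<beta>) (A * cy p + B)"
      by (simp add: affine_R_def twist_def)
    also have "\<dots> = cpt (l * cx p + \<alpha> * cy p + \<beta>) (A * cy p + B)"
      by (simp add: cpt_mult_frac[OF \<open>l \<in> \<int>\<close>] ll distrib_left mult.assoc)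
    also have "\<dots> = f p"
      using f[of "cx p" "cy p"] by simp
    finally show "f p = ((\<lambda>p. cpt (l * cx p + \<beta>) (cy p)) \<circ> affine_R A B \<circ> twist (l * \<alpha>)) p" ..
  qed
  then show ?thesis
    using reflection_translation_isometry[OF l] \<open>A \<noteq> 0\<close> by blast
qed

theorem theorem4p1:
  fixes f :: "cyl \<Rightarrow> cyl"
  assumes "geodesic_preserving f"
  shows "\<exists>g a b \<alpha>. cyl_isometry g \<and> a \<noteq> 0 \<and> f = g \<circ> affine_R a b \<circ> twist \<alpha>"
proof -
  interpret geodesic_preserving_map f
    by unfold_locales (rule assms)
  obtain l \<alpha> \<beta> A B where "A \<noteq> 0"
    and f: "\<And>u v. f (cpt u v) = cpt (l * u + \<alpha> * v + \<beta>) (A * v + B)"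
    using affine_coordinates by blast
  have "l = 1 \<or> l = -1"
    using inj_f f by (rule affine_cyl_map_unit_coeff)
  then show ?thesis
    using \<open>A \<noteq> 0\<close> f by (rule decompose_affine_cyl_map)
qed

end
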